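(* Let $\gamma:=2\Delta\lambda\max\{\lambda,\mu\}$, $\beta:=(4\Delta\lambda\gamma)^d$ and $\epsilon>0$. For every $v\in V$ let $\mathfrak a'_v:\mathbb R\to\mathbb R$ be an $\epsilon$-approximation of $\mathfrak a_v$ that is Lipschitz continuous with constant $2\lambda$, and let $\mathfrak A':=(V,E,(\mathfrak a'_v)_{v\in V})$. Then for all $\mathbf x\in\mathbb R^p$, $\mathbf b\in\mathbb R^V$ and $\mathbf w\in\mathbb R^E$, $$\|\mathfrak A(\mathbf x,\mathbf w,\mathbf b)-\mathfrak A'(\mathbf x,\mathbf w,\mathbf b)\|_\infty\le\beta(\|\mathbf w\|_\infty+1)^d(\|\mathbf x\|_\infty+\|\mathbf b\|_\infty+1)\epsilon.$$
   Context: $\mathfrak A=(V,E,(\mathfrak a_v)_{v\in V})$ is an FNN architecture: $(V,E)$ is a finite dag and each $\mathfrak a_v:\mathbb R\to\mathbb R$ is Lipschitz continuous. Sources are input nodes $X_1,\dots,X_p$, sinks are output nodes. For an architecture $\mathfrak B$ with activations $\mathfrak b_v$ on the same dag, $f_{\mathfrak B,X_i}(\mathbf x,\mathbf w,\mathbf b)=x_i$ and for non-input $v$, $f_{\mathfrak B,v}(\mathbf x,\mathbf w,\mathbf b)=\mathfrak b_v\big(b_v+\sum_{u:uv\in E}f_{\mathfrak B,u}(\mathbf x,\mathbf w,\mathbf b)w_{uv}\big)$; $\mathfrak B(\mathbf x,\mathbf w,\mathbf b)$ is the tuple of values at the outputs. $d$ is the depth of the dag, $\Delta\ge1$ its maximum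 in-degree, $\lambda\in\mathbb N_{>0}$ a Lipschitz constant of all $\mathfrak a_v$, $\mu=\max_v\lceil|\mathfrak a_v(0)|\rceil$. A function $g$ is an $\epsilon$-approximation of $f$ if $|f(x)-g(x)|\le\epsilon|f(x)|+\epsilon$ for all $x\in\mathbb R$. *)

theory Defs
  imports "HOL-Analysis.Analysis"
begin

definition fnn_dag :: "'v set \<Rightarrow> ('v \<times> 'v) set \<Rightarrow> bool" where
  "fnn_dag V E \<longleftrightarrow> finite V \<and> E \<subseteq> V \<times> V \<and> acyclic E"

definition in_nodes :: "'v set \<Rightarrow> ('v \<times> 'v) set \<Rightarrow> 'v set" where
  "in_nodes V E = {v \<in> V. \<not> (\<exists>u. (u, v) \<in> E)}"

definition out_nodes :: "'v set \<Rightarrow> ('v \<times> 'v) set \<Rightarrow> 'v set" where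
  "out_nodes V E = {v \<in> V. \<not> (\<exists>u. (v, u) \<in> E)}"

definition in_degree :: "('v \<times> 'v) set \<Rightarrow> 'v \<Rightarrow> nat" where
  "in_degree E v = card {u. (u, v) \<in> E}"

definition max_in_degree :: "'v set \<Rightarrow> ('v \<times> 'v) set \<Rightarrow> nat" where
  "max_in_degree V E = Max (insert 0 (in_degree E ` V))"

definition dag_depth :: "('v \<times> 'v) set \<Rightarrow> nat" where
  "dag_depth E = Max {n. \<exists>ps. length ps = Suc n \<and> (\<forall>i<n. (ps ! i, ps ! Suc i) \<in> E)}"

text \<open>Evaluation with fuel; for an acyclic graph, fuel card V suffices to reach the
  fixed point of the recursive definition of f_{B,v}.\<close>
fun fnn_eval_fuel :: "nat \<Rightarrow> 'v set \<Rightarrow> ('v \<times> 'v) set \<Rightarrow> ('v \<Rightarrow> real \<Rightarrow> real)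
    \<Rightarrow> ('v \<Rightarrow> real) \<Rightarrow> ('v \<times> 'v \<Rightarrow> real) \<Rightarrow> ('v \<Rightarrow> real) \<Rightarrow> 'v \<Rightarrow> real" where
  "fnn_eval_fuel 0 V E a x w b v = x v"
| "fnn_eval_fuel (Suc n) V E a x w b v =
     (if v \<in> in_nodes V E then x v
      else a v (b v + (\<Sum>u\<in>{u. (u, v) \<in> E}. fnn_eval_fuel n V E a x w b u * w (u, v))))"

definition fnn_eval :: "'v set \<Rightarrow> ('v \<times> 'v) set \<Rightarrow> ('v \<Rightarrow> real \<Rightarrow> real)
    \<Rightarrow> ('v \<Rightarrow> real) \<Rightarrow> ('v \<times> 'v \<Rightarrow> real) \<Rightarrow> ('v \<Rightarrow> real) \<Rightarrow> 'v \<Rightarrow> real" where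
  "fnn_eval V E a x w b v = fnn_eval_fuel (card V) V E a x w b v"

definition sup_norm :: "'i set \<Rightarrow> ('i \<Rightarrow> real) \<Rightarrow> real" where
  "sup_norm S f = Max (insert 0 ((\<lambda>i. \<bar>f i\<bar>) ` S))"

definition eps_approx :: "real \<Rightarrow> (real \<Rightarrow> real) \<Rightarrow> (real \<Rightarrow> real) \<Rightarrow> bool" where
  "eps_approx \<epsilon> f g \<longleftrightarrow> (\<forall>x. \<bar>f x - g x\<bar> \<le> \<epsilon> * \<bar>f x\<bar> + \<epsilon>)"

definition act_mu :: "'v set \<Rightarrow> ('v \<Rightarrow> real \<Rightarrow> real) \<Rightarrow> nat" where
  "act_mu V a = Max (insert 0 ((\<lambda>v. nat \<lceil>\<bar>a v 0\<bar>\<rceil>) ` V))"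

end

theory Submission
  imports Defs
begin

(* Let the level of a node be the maximal number of edges of a walk ending in it; levels are at
   most the depth d <= card V, so evaluation with card V units of fuel is exact up to level d.
   Let D bound the in-degrees, W the weights and X both the inputs and |b_v| + 1, and put
   M = max lambda mu. By induction on the level n, a node has value at most G^n X under A and
   deviates by at most K^n X eps from its value under A': since |a(t)| <= lambda |t| + M, one
   neuron multiplies the value bound by M + lambda D W <= G, and the deviation of its inputs,
   amplified by 2 lambda D W, is added to the approximation error eps (|a(t)| + 1) of the
   activation, which gives the factor G + 1 + 2 lambda D W <= K. The paper's constants are
   G = gamma (W + 1) and K = 4 D lambda G, so that K^d = beta (W + 1)^d. *)

definition walk_into :: "('v \<times> 'v) set \<Rightarrow> nat \<Rightarrow> 'v \<Rightarrow> bool" where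
  "walk_into E n v \<longleftrightarrow> (\<exists>p. p n = v \<and> (\<forall>i<n. (p i, p (Suc i)) \<in> E))"

lemma walk_into_SucI:
  assumes "walk_into E n u" and "(u, v) \<in> E"
  shows "walk_into E (Suc n) v"
proof -
  obtain p where p: "p n = u" "\<forall>i<n. (p i, p (Suc i)) \<in> E"
    using assms(1) unfolding walk_into_def by blast
  have "\<forall>i<Suc n. ((p(Suc n := v)) i, (p(Suc n := v)) (Suc i)) \<in> E"
    using p assms(2) by (auto simp: less_Suc_eq)
  then show ?thesis
    unfolding walk_into_def by (metis fun_upd_same)
qed

lemma in_nodesI_no_walk:
  assumes "v \<in> V" and "\<not> walk_into E 1 v"
  shows "v \<in> in_nodes V E"
proof -
  have "(u, v) \<notin> E" for u
    using assms(2) unfolding walk_into_def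
    by (metis One_nat_def less_one fun_upd_same fun_upd_other zero_neq_one)
  then show ?thesis
    using assms(1) unfolding in_nodes_def by blast
qed

lemma walk_trancl:
  assumes "\<forall>i<n. (p i, p (Suc i)) \<in> E" and "i < j" and "j \<le> n"
  shows "(p i, p j) \<in> E\<^sup>+"
  using assms(2,3)
proof (induction j)
  case 0
  then show ?case by simp
next
  case (Suc j)
  have step: "(p j, p (Suc j)) \<in> E"
    using assms(1) Suc.prems by simp
  show ?case
  proof (cases "i = j")
    case True
    then show ?thesis using step by auto
  next
    case False
    then have "(p i, p j) \<in> E\<^sup>+" using Suc by simp
    then show ?thesis using step by (rule trancl_into_trancl)
  qed
qed

lemma dag_walk_length_le_card:
  assumes "fnn_dag V E" and walk: "\<forall>i<n. (p i, p (Suc i)) \<in> E"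
  shows "n \<le> card V"
proof -
  have "finite V" "E \<subseteq> V \<times> V" "acyclic E"
    using assms(1) unfolding fnn_dag_def by auto
  have "p ` {..<n} \<subseteq> V"
    using walk \<open>E \<subseteq> V \<times> V\<close> by blast
  moreover have "inj_on p {..<n}"
  proof (rule linorder_inj_onI')
    fix i j assume "i \<in> {..<n}" "j \<in> {..<n}" "i < j"
    then have "(p i, p j) \<in> E\<^sup>+"
      using walk_trancl[OF walk] by simp
    then show "p i \<noteq> p j"
      using \<open>acyclic E\<close> unfolding acyclic_def by auto
  qed
  ultimately show ?thesis
    using card_inj_on_le[of p "{..<n}" V] \<open>finite V\<close> by simp
qed

lemma
  assumes "fnn_dag V E"
  shows dag_depth_le_card: "dag_depth E \<le> card V"
    and walk_into_le_dag_depth: "walk_into E n v \<Longrightarrow> n \<le> dag_depth E"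
proof -
  let ?S = "{n. \<exists>ps. length ps = Suc n \<and> (\<forall>i<n. (ps ! i, ps ! Suc i) \<in> E)}"
  have bounded: "?S \<subseteq> {..card V}"
    using dag_walk_length_le_card[OF assms, of _ "nth _"] by auto
  then have "finite ?S"
    using finite_subset by blast
  moreover have "0 \<in> ?S"
    by (auto intro: exI[of _ "[undefined]"])
  ultimately show "dag_depth E \<le> card V"
    unfolding dag_depth_def using Max_in bounded by blast
  show "n \<le> dag_depth E" if walk: "walk_into E n v"
  proof -
    obtain p where "\<forall>i<n. (p i, p (Suc i)) \<in> E"
      using walk unfolding walk_into_def by blast
    then have "n \<in> ?S"
      by (intro CollectI exI[of _ "map p [0..<Suc n]"]) (simp del: upt_Suc)
    then show ?thesis
      unfolding dag_depth_def using Max_ge \<open>finite ?S\<close> by blast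
  qed
qed

lemma lipschitz_abs_le:
  fixes f :: "real \<Rightarrow> real"
  assumes "L-lipschitz_on UNIV f"
  shows "\<bar>f t\<bar> \<le> L * \<bar>t\<bar> + \<bar>f 0\<bar>"
proof -
  have "\<bar>f t - f 0\<bar> \<le> L * \<bar>t\<bar>"
    using lipschitz_onD[OF assms, of t 0] by (simp add: dist_real_def)
  then show ?thesis by linarith
qed

lemma eps_approx_lipschitz_diff_le:
  fixes f g :: "real \<Rightarrow> real"
  assumes "eps_approx \<epsilon> f g" and "L-lipschitz_on UNIV g"
  shows "\<bar>f t - g t'\<bar> \<le> \<epsilon> * \<bar>f t\<bar> + \<epsilon> + L * \<bar>t - t'\<bar>"
proof -
  have "\<bar>f t - g t\<bar> \<le> \<epsilon> * \<bar>f t\<bar> + \<epsilon>"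
    using assms(1) unfolding eps_approx_def by blast
  moreover have "\<bar>g t - g t'\<bar> \<le> L * \<bar>t - t'\<bar>"
    using lipschitz_onD[OF assms(2), of t t'] by (simp add: dist_real_def)
  ultimately show ?thesis by linarith
qed

lemma abs_sum_mult_le:
  fixes f g :: "'a \<Rightarrow> real"
  assumes "\<forall>u\<in>P. \<bar>f u\<bar> \<le> B" and "\<forall>u\<in>P. \<bar>g u\<bar> \<le> W"
    and "real (card P) \<le> D" and "0 \<le> B" and "0 \<le> W"
  shows "\<bar>\<Sum>u\<in>P. f u * g u\<bar> \<le> D * B * W"
proof -
  have "\<bar>\<Sum>u\<in>P. f u * g u\<bar> \<le> (\<Sum>u\<in>P. \<bar>f u\<bar> * \<bar>g u\<bar>)"
    using sum_abs[of "\<lambda>u. f u * g u" P] by (simp add: abs_mult)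
  also have "\<dots> \<le> real (card P) * (B * W)"
    using assms(1,2) by (intro sum_bounded_above mult_mono) auto
  also have "\<dots> \<le> D * (B * W)"
    using assms by (intro mult_right_mono) auto
  finally show ?thesis by (simp add: mult.assoc)
qed

lemma neuron_bounds:
  fixes \<sigma> \<sigma>' :: "real \<Rightarrow> real" and f f' w :: "'u \<Rightarrow> real" and P :: "'u set" and \<beta> :: real
  defines "t \<equiv> \<beta> + (\<Sum>u\<in>P. f u * w u)" and "t' \<equiv> \<beta> + (\<Sum>u\<in>P. f' u * w u)"
  assumes card: "real (card P) \<le> D"
    and w: "\<forall>u\<in>P. \<bar>w u\<bar> \<le> W" and f: "\<forall>u\<in>P. \<bar>f u\<bar> \<le> B"
    and diff: "\<forall>u\<in>P. \<bar>f u - f' u\<bar> \<le> R"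
    and lip: "L-lipschitz_on UNIV \<sigma>" and lip': "L'-lipschitz_on UNIV \<sigma>'"
    and approx: "eps_approx \<epsilon> \<sigma> \<sigma>'"
    and M: "\<bar>\<sigma> 0\<bar> \<le> M" and LM: "0 \<le> L" "L \<le> M" and \<beta>: "\<bar>\<beta>\<bar> + 1 \<le> B"
    and nonneg: "0 \<le> W" "0 \<le> R" "0 \<le> L'" "0 \<le> \<epsilon>"
  shows "\<bar>\<sigma> t\<bar> \<le> (M + L * D * W) * B"
    and "\<bar>\<sigma> t - \<sigma>' t'\<bar> \<le> \<epsilon> * ((M + L * D * W) * B + 1) + L' * D * W * R"
proof -
  have "\<bar>t\<bar> \<le> \<bar>\<beta>\<bar> + D * B * W"
    unfolding t_def using abs_triangle_ineq abs_sum_mult_le[OF f w card _ nonneg(1)] \<beta>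
    by (smt (verit))
  then have "L * \<bar>t\<bar> \<le> L * (\<bar>\<beta>\<bar> + D * B * W)"
    using LM(1) by (rule mult_left_mono)
  moreover have "L * \<bar>\<beta>\<bar> \<le> M * \<bar>\<beta>\<bar>"
    using LM(2) abs_ge_zero by (rule mult_right_mono)
  moreover have "M * (\<bar>\<beta>\<bar> + 1) \<le> M * B"
    using \<beta> LM by (intro mult_left_mono) auto
  ultimately have "\<bar>\<sigma> t\<bar> \<le> M * B + L * D * W * B"
    using lipschitz_abs_le[OF lip, of t] M by (simp add: distrib_left mult_ac)
  then show value_bound: "\<bar>\<sigma> t\<bar> \<le> (M + L * D * W) * B"
    by (simp add: distrib_right)
  have "\<bar>t - t'\<bar> = \<bar>\<Sum>u\<in>P. (f u - f' u) * w u\<bar>"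
    unfolding t_def t'_def by (simp add: sum_subtractf left_diff_distrib)
  also have "\<dots> \<le> D * R * W"
    using abs_sum_mult_le[OF diff w card nonneg(2,1)] .
  finally have "L' * \<bar>t - t'\<bar> \<le> L' * (D * R * W)"
    using nonneg(3) by (rule mult_left_mono)
  moreover have "\<epsilon> * \<bar>\<sigma> t\<bar> \<le> \<epsilon> * ((M + L * D * W) * B)"
    using value_bound nonneg(4) by (rule mult_left_mono)
  ultimately show "\<bar>\<sigma> t - \<sigma>' t'\<bar> \<le> \<epsilon> * ((M + L * D * W) * B + 1) + L' * D * W * R"
    using eps_approx_lipschitz_diff_le[OF approx lip', of t t']
    by (simp add: distrib_left mult_ac)
qed

lemma deviation_step_le:
  fixes A B C G K c \<epsilon> :: real
  assumes "A \<le> G * B" "0 \<le> G" "B \<le> C" "1 \<le> C" "0 \<le> \<epsilon>" "G + 1 + c \<le> K"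
  shows "\<epsilon> * (A + 1) + c * (C * \<epsilon>) \<le> K * (C * \<epsilon>)"
proof -
  have "A \<le> G * C"
    using assms(1-3) by (meson mult_left_mono order_trans)
  then have "\<epsilon> * (A + 1) \<le> \<epsilon> * (G * C + C)"
    using assms(4,5) by (intro mult_left_mono) auto
  then have "\<epsilon> * (A + 1) + c * (C * \<epsilon>) \<le> (G + 1 + c) * (C * \<epsilon>)"
    by (simp add: algebra_simps)
  also have "\<dots> \<le> K * (C * \<epsilon>)"
    using assms(4-6) by (intro mult_right_mono) auto
  finally show ?thesis .
qed

lemma fnn_eval_fuel_in_node:
  "v \<in> in_nodes V E \<Longrightarrow> fnn_eval_fuel m V E a x w b v = x v"
  by (cases m) auto

locale fnn_perturbation =
  fixes V :: "'v set" and E :: "('v \<times> 'v) set"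
    and a a' :: "'v \<Rightarrow> real \<Rightarrow> real" and x b :: "'v \<Rightarrow> real" and w :: "'v \<times> 'v \<Rightarrow> real"
    and D W L L' M X \<epsilon> :: real
  assumes dag: "fnn_dag V E"
    and deg: "\<forall>v\<in>V. real (in_degree E v) \<le> D"
    and weights: "\<forall>e\<in>E. \<bar>w e\<bar> \<le> W"
    and lip: "\<forall>v\<in>V. L-lipschitz_on UNIV (a v)" and lip': "\<forall>v\<in>V. L'-lipschitz_on UNIV (a' v)"
    and approx: "\<forall>v\<in>V. eps_approx \<epsilon> (a v) (a' v)"
    and act0: "\<forall>v\<in>V. \<bar>a v 0\<bar> \<le> M"
    and inputs: "\<forall>v\<in>in_nodes V E. \<bar>x v\<bar> \<le> X" and biases: "\<forall>v\<in>V. \<bar>b v\<bar> + 1 \<le> X"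
    and nonneg: "0 \<le> L" "0 \<le> L'" "0 \<le> D" "0 \<le> W" "0 \<le> \<epsilon>"
    and L_le_M: "L \<le> M" and X_ge_1: "1 \<le> X"
begin

lemma fuel_Suc_bounds:
  assumes v: "v \<in> V" "v \<notin> in_nodes V E"
    and preds: "\<forall>u. (u, v) \<in> E \<longrightarrow> \<bar>fnn_eval_fuel m V E a x w b u\<bar> \<le> B
      \<and> \<bar>fnn_eval_fuel m V E a x w b u - fnn_eval_fuel m V E a' x w b u\<bar> \<le> R"
    and "X \<le> B" "0 \<le> R"
  shows "\<bar>fnn_eval_fuel (Suc m) V E a x w b v\<bar> \<le> (M + L * D * W) * B"
    and "\<bar>fnn_eval_fuel (Suc m) V E a x w b v - fnn_eval_fuel (Suc m) V E a' x w b v\<bar>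
      \<le> \<epsilon> * ((M + L * D * W) * B + 1) + L' * D * W * R"
proof -
  let ?P = "{u. (u, v) \<in> E}"
  have card: "real (card ?P) \<le> D" and weights_v: "\<forall>u\<in>?P. \<bar>w (u, v)\<bar> \<le> W"
    using deg weights v(1) unfolding in_degree_def by auto
  have pred_values: "\<forall>u\<in>?P. \<bar>fnn_eval_fuel m V E a x w b u\<bar> \<le> B"
    and pred_errors: "\<forall>u\<in>?P. \<bar>fnn_eval_fuel m V E a x w b u - fnn_eval_fuel m V E a' x w b u\<bar> \<le> R"
    using preds by auto
  have bias: "\<bar>b v\<bar> + 1 \<le> B"
    using biases v(1) \<open>X \<le> B\<close> by fastforce
  note neuron = neuron_bounds[OF card weights_v pred_values pred_errors lip[rule_format, OF v(1)]
      lip'[rule_format, OF v(1)] approx[rule_format, OF v(1)] act0[rule_format, OF v(1)]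
      nonneg(1) L_le_M bias nonneg(4) \<open>0 \<le> R\<close> nonneg(2,5)]
  show "\<bar>fnn_eval_fuel (Suc m) V E a x w b v\<bar> \<le> (M + L * D * W) * B"
    and "\<bar>fnn_eval_fuel (Suc m) V E a x w b v - fnn_eval_fuel (Suc m) V E a' x w b v\<bar>
      \<le> \<epsilon> * ((M + L * D * W) * B + 1) + L' * D * W * R"
    using neuron v(2) by simp_all
qed

lemma fuel_bounds:
  assumes growth: "1 \<le> G" "M + L * D * W \<le> G" "G + 1 + L' * D * W \<le> K"
    and v: "v \<in> V" "\<not> walk_into E (Suc n) v" and fuel: "n \<le> m"
  shows "\<bar>fnn_eval_fuel m V E a x w b v\<bar> \<le> G ^ n * X
    \<and> \<bar>fnn_eval_fuel m V E a x w b v - fnn_eval_fuel m V E a' x w b v\<bar> \<le> K ^ n * X * \<epsilon>"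
  using v fuel
proof (induction n arbitrary: v m)
  case 0
  then have "v \<in> in_nodes V E"
    using in_nodesI_no_walk by simp
  then show ?case
    using inputs X_ge_1 nonneg by (simp add: fnn_eval_fuel_in_node)
next
  case (Suc n)
  have "0 \<le> L' * D * W"
    using nonneg by simp
  then have "G \<le> K"
    using growth(3) by linarith
  have "1 \<le> G ^ k" "1 \<le> K ^ k" for k
    using growth(1) \<open>G \<le> K\<close> by (simp_all add: one_le_power)
  then have "X \<le> G ^ k * X" "1 \<le> K ^ k * X" for k
    using X_ge_1 by (simp_all add: mult_ge1_I)
  then have "0 \<le> K ^ k * X * \<epsilon>" for k
    using nonneg(5) by (smt (verit) mult_nonneg_nonneg)
  show ?case
  proof (cases "v \<in> in_nodes V E")
    case True
    then have "\<bar>x v\<bar> \<le> G ^ Suc n * X"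
      using inputs \<open>X \<le> G ^ Suc n * X\<close> by (meson order_trans)
    then show ?thesis
      using True \<open>0 \<le> K ^ Suc n * X * \<epsilon>\<close> by (simp add: fnn_eval_fuel_in_node)
  next
    case False
    obtain m' where m': "m = Suc m'" "n \<le> m'"
      using Suc.prems(3) by (cases m) auto
    have "E \<subseteq> V \<times> V"
      using dag by (simp add: fnn_dag_def)
    moreover have "\<not> walk_into E (Suc n) u" if "(u, v) \<in> E" for u
      using walk_into_SucI[OF _ that] Suc.prems(2) by blast
    ultimately have "\<forall>u. (u, v) \<in> E \<longrightarrow> \<bar>fnn_eval_fuel m' V E a x w b u\<bar> \<le> G ^ n * X
        \<and> \<bar>fnn_eval_fuel m' V E a x w b u - fnn_eval_fuel m' V E a' x w b u\<bar> \<le> K ^ n * X * \<epsilon>"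
      using Suc.IH m'(2) by auto
    note node = fuel_Suc_bounds[OF Suc.prems(1) False this \<open>X \<le> G ^ n * X\<close> \<open>0 \<le> K ^ n * X * \<epsilon>\<close>]
    have value_growth: "(M + L * D * W) * (G ^ n * X) \<le> G * (G ^ n * X)"
      using growth(2) \<open>X \<le> G ^ n * X\<close> X_ge_1 by (intro mult_right_mono) auto
    have "G ^ n * X \<le> K ^ n * X"
      using growth(1) \<open>G \<le> K\<close> X_ge_1 by (intro mult_right_mono power_mono) auto
    then have "\<epsilon> * ((M + L * D * W) * (G ^ n * X) + 1) + L' * D * W * (K ^ n * X * \<epsilon>)
        \<le> K ^ Suc n * X * \<epsilon>"
      using deviation_step_le[OF value_growth _ _ \<open>1 \<le> K ^ n * X\<close> nonneg(5) growth(3)] growth(1)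
      by (simp add: mult_ac)
    then show ?thesis
      using node value_growth m'(1) by simp
  qed
qed

lemma eval_error_bound:
  assumes "1 \<le> G" "M + L * D * W \<le> G" "G + 1 + L' * D * W \<le> K" and "v \<in> V"
  shows "\<bar>fnn_eval V E a x w b v - fnn_eval V E a' x w b v\<bar> \<le> K ^ dag_depth E * X * \<epsilon>"
proof -
  have "\<not> walk_into E (Suc (dag_depth E)) v"
    using walk_into_le_dag_depth[OF dag] by fastforce
  then show ?thesis
    unfolding fnn_eval_def using fuel_bounds[OF assms] dag_depth_le_card[OF dag] by blast
qed

end

lemma growth_constants:
  fixes D L M W :: real
  assumes "1 \<le> D" "1 \<le> L" "L \<le> M" "0 \<le> W"
  defines "G \<equiv> 2 * D * L * M * (W + 1)"
  shows "1 \<le> G" "M + L * D * W \<le> G" "G + 1 + 2 * L * D * W \<le> 4 * D * L * G"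
proof -
  have DL: "1 \<le> D * L" and "1 \<le> M"
    using assms(1-3) by (simp_all add: mult_ge1_I)
  then have "1 \<le> D * L * (W + 1)" and "W \<le> M * (W + 1)"
    using assms(4) by (simp_all add: mult_ge1_I order_trans[OF _ mult_right_mono[of 1 M]])
  then have "M * 1 \<le> M * (D * L * (W + 1))" and "(L * D) * W \<le> (L * D) * (M * (W + 1))"
    using \<open>1 \<le> M\<close> assms(1,2) by (intro mult_left_mono; simp)+
  then show "M + L * D * W \<le> G"
    unfolding G_def by (simp add: algebra_simps)
  have "1 \<le> D * L * M"
    using DL \<open>1 \<le> M\<close> by (simp add: mult_ge1_I)
  then have "W + 1 \<le> G"
    unfolding G_def using assms(4) by (simp add: mult_ge1_I)
  then show "1 \<le> G"
    using assms(4) by simp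
  then have "1 * G \<le> (D * L) * G" and "(D * L) * W \<le> (D * L) * G"
    using DL \<open>W + 1 \<le> G\<close> by (intro mult_right_mono mult_left_mono; simp)+
  moreover have "2 * L * D * W = 2 * ((D * L) * W)" and "4 * D * L * G = 4 * ((D * L) * G)"
    by (simp_all add: mult_ac)
  ultimately show "G + 1 + 2 * L * D * W \<le> 4 * D * L * G"
    using \<open>1 \<le> G\<close> by linarith
qed

lemma abs_le_sup_norm: "finite S \<Longrightarrow> i \<in> S \<Longrightarrow> \<bar>f i\<bar> \<le> sup_norm S f"
  unfolding sup_norm_def by (intro Max_ge) auto

lemma sup_norm_nonneg: "finite S \<Longrightarrow> 0 \<le> sup_norm S f"
  unfolding sup_norm_def by (intro Max_ge) auto

lemma in_degree_le_max_in_degree: "finite V \<Longrightarrow> v \<in> V \<Longrightarrow> in_degree E v \<le> max_in_degree V E"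
  unfolding max_in_degree_def by (intro Max_ge) auto

lemma abs_le_act_mu: "finite V \<Longrightarrow> v \<in> V \<Longrightarrow> \<bar>a v 0\<bar> \<le> real (act_mu V a)"
proof -
  assume "finite V" "v \<in> V"
  then have "nat \<lceil>\<bar>a v 0\<bar>\<rceil> \<le> act_mu V a"
    unfolding act_mu_def by (intro Max_ge) auto
  then show ?thesis
    by linarith
qed

lemma fnn_perturbation_sup_norms:
  assumes dag: "fnn_dag V E"
    and lip: "\<forall>v\<in>V. L-lipschitz_on UNIV (a v)" and lip': "\<forall>v\<in>V. L'-lipschitz_on UNIV (a' v)"
    and approx: "\<forall>v\<in>V. eps_approx \<epsilon> (a v) (a' v)"
    and "0 \<le> L" "0 \<le> L'" "0 \<le> \<epsilon>"
  shows "fnn_perturbation V E a a' x b w (max_in_degree V E) (sup_norm E w) L L'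
    (max L (act_mu V a)) (sup_norm (in_nodes V E) x + sup_norm V b + 1) \<epsilon>"
proof -
  have "finite V" and "E \<subseteq> V \<times> V"
    using dag by (simp_all add: fnn_dag_def)
  then have "finite E" "finite (in_nodes V E)"
    unfolding in_nodes_def by (auto intro: finite_subset)
  note sup_norms = sup_norm_nonneg[OF \<open>finite V\<close>, of b] sup_norm_nonneg[OF \<open>finite E\<close>, of w]
    sup_norm_nonneg[OF \<open>finite (in_nodes V E)\<close>, of x]
  show ?thesis
  proof
    show "\<forall>v\<in>V. real (in_degree E v) \<le> real (max_in_degree V E)"
      using in_degree_le_max_in_degree[OF \<open>finite V\<close>] by simp
    show "\<forall>v\<in>V. \<bar>a v 0\<bar> \<le> max L (real (act_mu V a))"
      using abs_le_act_mu[OF \<open>finite V\<close>] by (meson max.coboundedI2)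
    show "\<forall>v\<in>in_nodes V E. \<bar>x v\<bar> \<le> sup_norm (in_nodes V E) x + sup_norm V b + 1"
      using abs_le_sup_norm[OF \<open>finite (in_nodes V E)\<close>, of _ x] sup_norms by force
    show "\<forall>v\<in>V. \<bar>b v\<bar> + 1 \<le> sup_norm (in_nodes V E) x + sup_norm V b + 1"
      using abs_le_sup_norm[OF \<open>finite V\<close>, of _ b] sup_norms by force
  qed (use assms abs_le_sup_norm[OF \<open>finite E\<close>] sup_norms in auto)
qed

theorem lemma6p8:
  fixes V :: "'v set" and E :: "('v \<times> 'v) set"
    and a a' :: "'v \<Rightarrow> real \<Rightarrow> real" and lam :: nat and \<epsilon> :: real
    and x b :: "'v \<Rightarrow> real" and w :: "'v \<times> 'v \<Rightarrow> real"
  assumes dag: "fnn_dag V E"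
    and Delta_ge1: "max_in_degree V E \<ge> 1"
    and lam_pos: "lam > 0"
    and lip: "\<forall>v\<in>V. (real lam)-lipschitz_on UNIV (a v)"
    and eps_pos: "\<epsilon> > 0"
    and approx: "\<forall>v\<in>V. eps_approx \<epsilon> (a v) (a' v)"
    and lip': "\<forall>v\<in>V. (2 * real lam)-lipschitz_on UNIV (a' v)"
  shows "let \<Delta> = real (max_in_degree V E); \<mu> = real (act_mu V a); d = dag_depth E;
             \<gamma> = 2 * \<Delta> * real lam * max (real lam) \<mu>;
             \<beta> = (4 * \<Delta> * real lam * \<gamma>) ^ d
         in \<forall>y\<in>out_nodes V E.
              \<bar>fnn_eval V E a x w b y - fnn_eval V E a' x w b y\<bar>
                \<le> \<beta> * (sup_norm E w + 1) ^ d
                    * (sup_norm (in_nodes V E) x + sup_norm V b + 1) * \<epsilon>"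
proof -
  let ?\<Delta> = "real (max_in_degree V E)" and ?M = "max (real lam) (real (act_mu V a))"
  let ?W = "sup_norm E w" and ?X = "sup_norm (in_nodes V E) x + sup_norm V b + 1"
  let ?\<gamma> = "2 * ?\<Delta> * real lam * ?M"
  interpret fnn_perturbation V E a a' x b w ?\<Delta> ?W "real lam" "2 * real lam" ?M ?X \<epsilon>
    using fnn_perturbation_sup_norms[OF dag lip lip' approx] eps_pos by simp
  have "1 \<le> ?\<Delta>" "1 \<le> real lam"
    using Delta_ge1 lam_pos by simp_all
  note growth = growth_constants[OF this L_le_M nonneg(4)]
  have "out_nodes V E \<subseteq> V"
    unfolding out_nodes_def by blast
  then have "\<forall>y\<in>out_nodes V E. \<bar>fnn_eval V E a x w b y - fnn_eval V E a' x w b y\<bar>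
      \<le> (4 * ?\<Delta> * real lam * (?\<gamma> * (?W + 1))) ^ dag_depth E * ?X * \<epsilon>"
    using eval_error_bound[OF growth] by (auto simp: mult_ac)
  then show ?thesis
    unfolding Let_def by (simp add: power_mult_distrib mult_ac)
qed

end
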